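(* Let $P$ be a finite lattice and $f\in\mathcal{L}_P$, and let $\mathcal{W}_f=\{w\in\mathcal{L}_P: w\le f,\ w\text{ prime}\}=\{w_1,\dots,w_m\}$. Then $f=w_1+\cdots+w_m$.
   Context: $P$ is a finite lattice. $\mathcal{L}_P$ is the set of maps $f:P\to P$ satisfying (A.1) $a\le f(a)$; (A.2) $a\le b\Rightarrow f(a)\le f(b)$; (A.3) $f(f(a))=f(a)$, ordered pointwise; it is a lattice with join $+$. $\Phi f=\{a:f(a)=a\}$. $f$ is prime if $P\setminus\Phi f$ is closed under $\wedge$. *)

theory Defs
  imports Main
begin

text \<open>Closure operators on a lattice: the elements of L_P (conditions A.1--A.3).\<close>
definition closure_op :: "('a::lattice \<Rightarrow> 'a) \<Rightarrow> bool" where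
  "closure_op f \<longleftrightarrow>
     (\<forall>a. a \<le> f a) \<and> (\<forall>a b. a \<le> b \<longrightarrow> f a \<le> f b) \<and> (\<forall>a. f (f a) = f a)"

definition Phi :: "('a \<Rightarrow> 'a) \<Rightarrow> 'a set" where
  "Phi f = {a. f a = a}"

definition prime_cl :: "('a::lattice \<Rightarrow> 'a) \<Rightarrow> bool" where
  "prime_cl f \<longleftrightarrow> (\<forall>a b. a \<notin> Phi f \<longrightarrow> b \<notin> Phi f \<longrightarrow> inf a b \<notin> Phi f)"

definition W_set :: "('a::lattice \<Rightarrow> 'a) \<Rightarrow> ('a \<Rightarrow> 'a) set" where
  "W_set f = {w. closure_op w \<and> w \<le> f \<and> prime_cl w}"

definition is_L_join :: "('a::lattice \<Rightarrow> 'a) set \<Rightarrow> ('a \<Rightarrow> 'a) \<Rightarrow> bool" where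
  "is_L_join W j \<longleftrightarrow> closure_op j \<and> (\<forall>w\<in>W. w \<le> j) \<and>
     (\<forall>g. closure_op g \<longrightarrow> (\<forall>w\<in>W. w \<le> g) \<longrightarrow> j \<le> g)"

end

theory Submission
  imports Defs
begin

text \<open>For every a, the closure operator that only moves the elements above a, sending them up
  past f a, is prime and lies below f. Any closure operator g above all of them has each of its
  fixed points y closed under f (take a = y), and a closure operator is determined from above by
  its fixed points, so f \<le> g.\<close>

lemma closure_opD:
  assumes "closure_op f"
  shows closure_op_ge: "x \<le> f x"
    and closure_op_mono: "x \<le> y \<Longrightarrow> f x \<le> f y"
    and closure_op_idem: "f (f x) = f x"
  using assms unfolding closure_op_def by blast+

lemma closure_op_le_if_Phi_subset:
  assumes "closure_op f" "closure_op g" "Phi g \<subseteq> Phi f"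
  shows "f \<le> g"
proof (rule le_funI)
  fix x
  have "g x \<in> Phi f"
    using assms(3) closure_op_idem[OF assms(2)] unfolding Phi_def by blast
  then have "f (g x) = g x"
    unfolding Phi_def by simp
  moreover have "f x \<le> f (g x)"
    using closure_op_mono[OF assms(1) closure_op_ge[OF assms(2)]] .
  ultimately show "f x \<le> g x"
    by simp
qed

definition principal_closure :: "'a::lattice \<Rightarrow> 'a \<Rightarrow> 'a \<Rightarrow> 'a" where
  "principal_closure a c x = (if a \<le> x then sup x c else x)"

lemma closure_op_principal_closure: "closure_op (principal_closure a c)"
  unfolding closure_op_def principal_closure_def
  by (auto intro: le_supI1 sup_mono order_trans)

lemma Phi_principal_closure: "Phi (principal_closure a c) = {x. a \<le> x \<longrightarrow> c \<le> x}"
  unfolding Phi_def principal_closure_def by (auto simp: sup_absorb1 sup_commute le_iff_sup)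

lemma prime_cl_principal_closure: "prime_cl (principal_closure a c)"
  unfolding prime_cl_def Phi_principal_closure by (auto intro: order_trans)

lemma principal_closure_le:
  assumes "closure_op f"
  shows "principal_closure a (f a) \<le> f"
  unfolding le_fun_def principal_closure_def
  using closure_op_ge[OF assms] closure_op_mono[OF assms] by auto

lemma principal_closure_in_W_set:
  assumes "closure_op f"
  shows "principal_closure a (f a) \<in> W_set f"
  unfolding W_set_def using assms
  by (simp add: closure_op_principal_closure principal_closure_le prime_cl_principal_closure)

theorem mainTheorem14:
  fixes f :: "'a::{finite, lattice} \<Rightarrow> 'a"
  assumes "closure_op f"
  shows "is_L_join (W_set f) f"
proof -
  have "f \<le> g" if "closure_op g" and ub: "\<forall>w\<in>W_set f. w \<le> g" for g
  proof (rule closure_op_le_if_Phi_subset[OF assms \<open>closure_op g\<close>], rule subsetI)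
    fix y
    assume "y \<in> Phi g"
    then have gy: "g y = y"
      unfolding Phi_def by simp
    have "principal_closure y (f y) y \<le> g y"
      using ub principal_closure_in_W_set[OF assms] by (auto simp: le_fun_def)
    then have "f y \<le> y"
      using gy by (simp add: principal_closure_def)
    then show "y \<in> Phi f"
      using closure_op_ge[OF assms, of y] unfolding Phi_def by (simp add: antisym)
  qed
  then show ?thesis
    using assms unfolding is_L_join_def W_set_def by auto
qed

end
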